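(* Let $k\ge2$ and $\tau\in\mathcal{S}_k$ with $\mathcal{J}(\tau)=\{0,1,\ldots,k\}$. Then there is a unique $\bar\tau\in\mathcal{S}_{k+3}$ with $\mathcal{J}(\bar\tau)=\{0,1,\ldots,k,k+2,k+3\}$ whose length-$k$ initial pattern equals $\tau$.
   Context: The pattern of a word of $j$ distinct letters is its order-preserving relabeling by $\{1,\ldots,j\}$; the length-$j$ initial pattern of $\sigma$ is the pattern of $\sigma_1\ldots\sigma_j$. The $j$-set $\mathcal{J}(\sigma)$ of $\sigma\in\mathcal{S}_m$ is the set consisting of $0$ together with all $j\in\{1,\ldots,m\}$ such that the length-$j$ initial pattern of $\sigma$ is an involution in $\mathcal{S}_j$. *)

theory Defs
  imports "HOL-Combinatorics.Permutations"
begin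

text \<open>A permutation in S_m is a function nat => nat that permutes {1..m}
  (identity outside).\<close>

definition init_pattern :: "(nat \<Rightarrow> nat) \<Rightarrow> nat \<Rightarrow> nat \<Rightarrow> nat" where
  "init_pattern \<sigma> j = (\<lambda>i. if i \<in> {1..j} then card {l \<in> {1..j}. \<sigma> l \<le> \<sigma> i} else i)"

definition is_involution :: "nat \<Rightarrow> (nat \<Rightarrow> nat) \<Rightarrow> bool" where
  "is_involution j p \<longleftrightarrow> p permutes {1..j} \<and> p \<circ> p = id"

definition jset :: "nat \<Rightarrow> (nat \<Rightarrow> nat) \<Rightarrow> nat set" where
  "jset m \<sigma> = {0} \<union> {j \<in> {1..m}. is_involution j (init_pattern \<sigma> j)}"

end

(*
  Call an involution sigma of {1..n} tail-reversing if it reverses the block of positions from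
  sigma(n) to n.  An involution sigma of {1..n+1} has an involutive initial pattern of length n
  exactly when it is tail-reversing.  Hence tau, all of whose initial patterns are involutions,
  is tail-reversing, and so is its restriction to {1..k-1} when tau(k) = k.

  Let tau' be a solution.  Its patterns of lengths k+3 and k+2 are involutions, so tau' is
  tail-reversing; if tau' moved k+3, its pattern of length k+2 would inherit the reversed tail
  and the pattern of length k+1 would be an involution.  So tau' fixes k+3 and arises from tau
  by appending a value u (giving the pattern of length k+1) and then a value w.  Since tau' is
  an involution whose pattern of length k+1 is not, w = c = tau(k).  The choice u = c is
  excluded, since appending tau(k) to a tail-reversing involution gives an involution; what
  remains of the involution property leaves only u = k if c < k and u = tau(k-1) if c = k.
  Conversely, this choice is a conjugate by transpositions of such an appended tail-reversing
  involution, hence an involution.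
*)

theory Submission
  imports Defs
begin

lemma init_pattern_outside: "i \<notin> {1..j} \<Longrightarrow> init_pattern \<sigma> j i = i"
  by (auto simp: init_pattern_def)

lemma init_pattern_le_iff:
  assumes "inj_on \<sigma> {1..j}" and "l \<in> {1..j}" and "i \<in> {1..j}"
  shows "init_pattern \<sigma> j l \<le> init_pattern \<sigma> j i \<longleftrightarrow> \<sigma> l \<le> \<sigma> i"
proof
  assume "\<sigma> l \<le> \<sigma> i"
  then have "{x \<in> {1..j}. \<sigma> x \<le> \<sigma> l} \<subseteq> {x \<in> {1..j}. \<sigma> x \<le> \<sigma> i}" by auto
  then show "init_pattern \<sigma> j l \<le> init_pattern \<sigma> j i"
    using assms(2,3) unfolding init_pattern_def by (simp add: card_mono)
next
  assume le: "init_pattern \<sigma> j l \<le> init_pattern \<sigma> j i"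
  show "\<sigma> l \<le> \<sigma> i"
  proof (rule ccontr)
    assume "\<not> \<sigma> l \<le> \<sigma> i"
    then have "{x \<in> {1..j}. \<sigma> x \<le> \<sigma> i} \<subset> {x \<in> {1..j}. \<sigma> x \<le> \<sigma> l}"
      using assms(2) by auto
    then have "card {x \<in> {1..j}. \<sigma> x \<le> \<sigma> i} < card {x \<in> {1..j}. \<sigma> x \<le> \<sigma> l}"
      by (simp add: psubset_card_mono)
    then show False using le assms(2,3) unfolding init_pattern_def by simp
  qed
qed

lemma init_pattern_permutes:
  assumes inj: "inj_on \<sigma> {1..j}"
  shows "init_pattern \<sigma> j permutes {1..j}"
proof (rule inj_imp_permutes)
  show "inj_on (init_pattern \<sigma> j) {1..j}"
  proof (rule inj_onI)
    fix x y assume x: "x \<in> {1..j}" and y: "y \<in> {1..j}"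
      and eq: "init_pattern \<sigma> j x = init_pattern \<sigma> j y"
    then have "\<sigma> x = \<sigma> y"
      using init_pattern_le_iff[OF inj x y] init_pattern_le_iff[OF inj y x] by simp
    then show "x = y" using inj_onD[OF inj _ x y] by simp
  qed
  fix x assume x: "x \<in> {1..j}"
  have "card {l \<in> {1..j}. \<sigma> l \<le> \<sigma> x} \<le> card {1..j}" by (rule card_mono) auto
  moreover have "card {l \<in> {1..j}. \<sigma> l \<le> \<sigma> x} > 0" using x by (subst card_gt_0_iff) auto
  ultimately show "init_pattern \<sigma> j x \<in> {1..j}" using x unfolding init_pattern_def by simp
qed (simp_all add: init_pattern_outside del: atLeastAtMost_iff)

lemma init_pattern_self:
  assumes p: "\<sigma> permutes {1..n}"
  shows "init_pattern \<sigma> n = \<sigma>"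
proof
  fix i
  show "init_pattern \<sigma> n i = \<sigma> i"
  proof (cases "i \<in> {1..n}")
    case True
    have "\<sigma> ` {l \<in> {1..n}. \<sigma> l \<le> \<sigma> i} = {y \<in> \<sigma> ` {1..n}. y \<le> \<sigma> i}" by auto
    also have "\<dots> = {1..\<sigma> i}"
      using permutes_image[OF p] permutes_in_image[OF p, of i] True by auto
    finally have "card {l \<in> {1..n}. \<sigma> l \<le> \<sigma> i} = card {1..\<sigma> i}"
      using card_image[OF permutes_inj_on[OF p]] by metis
    then have "card {l \<in> {1..n}. \<sigma> l \<le> \<sigma> i} = \<sigma> i" by simp
    then show ?thesis using True by (simp add: init_pattern_def)
  next
    case False
    then show ?thesis using permutes_not_in[OF p False] init_pattern_outside[OF False] by simp
  qed
qed

lemma init_pattern_init_pattern: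
  assumes inj: "inj_on \<sigma> {1..m}" and "j \<le> m"
  shows "init_pattern (init_pattern \<sigma> m) j = init_pattern \<sigma> j"
proof
  fix i
  show "init_pattern (init_pattern \<sigma> m) j i = init_pattern \<sigma> j i"
  proof (cases "i \<in> {1..j}")
    case True
    have "{l \<in> {1..j}. init_pattern \<sigma> m l \<le> init_pattern \<sigma> m i} = {l \<in> {1..j}. \<sigma> l \<le> \<sigma> i}"
      using init_pattern_le_iff[OF inj] True \<open>j \<le> m\<close> by auto
    then show ?thesis using True by (simp add: init_pattern_def[of _ j])
  qed (simp_all add: init_pattern_outside del: atLeastAtMost_iff)
qed

lemma init_pattern_drop_last:
  assumes p: "\<sigma> permutes {1..Suc n}" and i: "i \<in> {1..n}"
  shows "init_pattern \<sigma> n i = (if \<sigma> (Suc n) < \<sigma> i then \<sigma> i - 1 else \<sigma> i)"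
proof -
  define A where "A = {l \<in> {1..n}. \<sigma> l \<le> \<sigma> i}"
  have split: "{l \<in> {1..Suc n}. \<sigma> l \<le> \<sigma> i}
      = (if \<sigma> (Suc n) \<le> \<sigma> i then insert (Suc n) A else A)"
    unfolding A_def by (auto simp: le_Suc_eq)
  have "\<sigma> i = init_pattern \<sigma> (Suc n) i"
    by (simp add: init_pattern_self[OF p])
  also have "\<dots> = card {l \<in> {1..Suc n}. \<sigma> l \<le> \<sigma> i}"
    using i by (simp add: init_pattern_def)
  also have "\<dots> = init_pattern \<sigma> n i + (if \<sigma> (Suc n) \<le> \<sigma> i then 1 else 0)"
    using split i by (simp add: A_def init_pattern_def)
  finally have "init_pattern \<sigma> n i + (if \<sigma> (Suc n) \<le> \<sigma> i then 1 else 0) = \<sigma> i" ..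
  moreover have "\<sigma> (Suc n) \<noteq> \<sigma> i"
    using injD[OF permutes_inj[OF p], of "Suc n" i] i by auto
  ultimately show ?thesis by (cases "\<sigma> (Suc n) \<le> \<sigma> i") auto
qed

lemma permutes_drop_fixed_last:
  assumes "\<sigma> permutes {1..Suc n}" and "\<sigma> (Suc n) = Suc n"
  shows "\<sigma> permutes {1..n}"
  using permutes_superset[OF assms(1)] assms(2) by (metis Diff_iff atLeastAtMost_iff le_Suc_eq)

lemma permutes_transpose_commute:
  assumes "p permutes S" and "a \<notin> S" and "b \<notin> S"
  shows "p (transpose a b x) = transpose a b (p x)"
proof (cases "x \<in> S")
  case True
  moreover have "p x \<in> S" using permutes_in_image[OF assms(1)] True by simp
  ultimately have "x \<noteq> a" "x \<noteq> b" "p x \<noteq> a" "p x \<noteq> b" using assms(2,3) by auto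
  then show ?thesis by simp
next
  case False
  then have "transpose a b x \<notin> S" using assms(2,3) by (auto simp: transpose_def)
  then show ?thesis using False by (simp add: permutes_not_in[OF assms(1)])
qed

definition append_value :: "(nat \<Rightarrow> nat) \<Rightarrow> nat \<Rightarrow> nat \<Rightarrow> nat \<Rightarrow> nat" where
  "append_value q v n = (\<lambda>i. if i \<in> {1..n} then (if v \<le> q i then Suc (q i) else q i)
                               else if i = Suc n then v else i)"

lemma append_value_apply: "i \<in> {1..n} \<Longrightarrow> append_value q v n i = (if v \<le> q i then Suc (q i) else q i)"
  by (simp add: append_value_def)

lemma append_value_last [simp]: "append_value q v n (Suc n) = v"
  by (simp add: append_value_def)

lemma append_value_outside: "i \<notin> {1..Suc n} \<Longrightarrow> append_value q v n i = i"
  by (auto simp: append_value_def)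

lemma append_value_init_pattern:
  assumes p: "\<sigma> permutes {1..Suc n}"
  shows "append_value (init_pattern \<sigma> n) (\<sigma> (Suc n)) n = \<sigma>"
proof
  fix i
  consider "i \<in> {1..n}" | "i = Suc n" | "i \<notin> {1..Suc n}" by fastforce
  then show "append_value (init_pattern \<sigma> n) (\<sigma> (Suc n)) n i = \<sigma> i"
  proof cases
    case 1
    have "\<sigma> (Suc n) \<noteq> \<sigma> i" using injD[OF permutes_inj[OF p], of "Suc n" i] 1 by auto
    then show ?thesis using 1 by (auto simp: append_value_apply init_pattern_drop_last[OF p])
  qed (simp_all add: append_value_outside permutes_not_in[OF p])
qed

lemma permutes_apply_init_pattern:
  assumes "\<sigma> permutes {1..Suc n}" and "i \<in> {1..n}"
  shows "\<sigma> i = (if \<sigma> (Suc n) \<le> init_pattern \<sigma> n i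
    then Suc (init_pattern \<sigma> n i) else init_pattern \<sigma> n i)"
proof -
  have "\<sigma> i = append_value (init_pattern \<sigma> n) (\<sigma> (Suc n)) n i"
    by (simp add: append_value_init_pattern[OF assms(1)])
  then show ?thesis using assms(2) by (simp add: append_value_apply)
qed

lemma append_value_permutes:
  assumes q: "q permutes {1..n}" and v: "v \<in> {1..Suc n}"
  shows "append_value q v n permutes {1..Suc n}"
proof (rule inj_imp_permutes)
  let ?s = "append_value q v n"
  have q_in: "q i \<in> {1..n}" if "i \<in> {1..n}" for i using permutes_in_image[OF q] that by simp
  have not_v: "?s i \<noteq> v" if "i \<in> {1..n}" for i using that by (simp add: append_value_apply)
  have "i = j" if "i \<in> {1..n}" "j \<in> {1..n}" "?s i = ?s j" for i j
  proof -
    have "q i = q j" using that by (auto simp: append_value_apply split: if_splits)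
    then show "i = j" using injD[OF permutes_inj[OF q]] by blast
  qed
  then show "inj_on ?s {1..Suc n}"
    using not_v not_v[THEN not_sym] by (auto simp: inj_on_def le_Suc_eq)
  show "?s i \<in> {1..Suc n}" if "i \<in> {1..Suc n}" for i
    using that q_in v by (cases "i = Suc n") (auto simp: append_value_apply)
qed (simp_all add: append_value_outside)

lemma init_pattern_append_value:
  assumes q: "q permutes {1..n}" and v: "v \<in> {1..Suc n}"
  shows "init_pattern (append_value q v n) n = q"
proof
  fix i
  have s: "append_value q v n permutes {1..Suc n}" by (rule append_value_permutes[OF q v])
  show "init_pattern (append_value q v n) n i = q i"
  proof (cases "i \<in> {1..n}")
    case True
    then show ?thesis by (auto simp: init_pattern_drop_last[OF s] append_value_apply)
  next
    case False
    then show ?thesis using permutes_not_in[OF q] by (simp add: init_pattern_outside)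
  qed
qed

lemma is_involution_iff: "is_involution n \<sigma> \<longleftrightarrow> \<sigma> permutes {1..n} \<and> (\<forall>i. \<sigma> (\<sigma> i) = i)"
  by (auto simp: is_involution_def fun_eq_iff)

definition reverses_tail :: "nat \<Rightarrow> (nat \<Rightarrow> nat) \<Rightarrow> bool" where
  "reverses_tail n \<sigma> \<longleftrightarrow> (\<forall>i \<in> {\<sigma> n..n}. \<sigma> i + i = \<sigma> n + n)"

lemma reverses_tailD: "reverses_tail n \<sigma> \<Longrightarrow> \<sigma> n \<le> i \<Longrightarrow> i \<le> n \<Longrightarrow> \<sigma> i + i = \<sigma> n + n"
  unfolding reverses_tail_def by (meson atLeastAtMost_iff)

lemma reverses_tail_below:
  assumes inv: "is_involution n \<sigma>" and rev: "reverses_tail n \<sigma>" and i: "i < \<sigma> n"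
  shows "\<sigma> i < \<sigma> n"
proof (cases "i \<in> {1..n}")
  case True
  have perm: "\<sigma> permutes {1..n}" and invol: "\<And>x. \<sigma> (\<sigma> x) = x"
    using inv by (simp_all add: is_involution_iff)
  have "\<sigma> i \<in> {1..n}" using permutes_in_image[OF perm] True by simp
  show ?thesis
  proof (rule ccontr)
    assume "\<not> \<sigma> i < \<sigma> n"
    then have "\<sigma> (\<sigma> i) + \<sigma> i = \<sigma> n + n"
      using reverses_tailD[OF rev, of "\<sigma> i"] \<open>\<sigma> i \<in> {1..n}\<close> by simp
    then show False using invol[of i] i \<open>\<sigma> i \<in> {1..n}\<close> by simp
  qed
next
  case False
  then have "\<sigma> i = i" using inv permutes_not_in[of \<sigma> "{1..n}" i] by (simp add: is_involution_iff)
  then show ?thesis using i by simp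
qed

lemma reverses_tail_if_init_pattern_involution:
  assumes inv: "is_involution (Suc n) \<sigma>" and p_inv: "is_involution n (init_pattern \<sigma> n)"
  shows "reverses_tail (Suc n) \<sigma>"
proof -
  define v where "v = \<sigma> (Suc n)"
  define p where "p = init_pattern \<sigma> n"
  have perm: "\<sigma> permutes {1..Suc n}" and invol: "\<And>x. \<sigma> (\<sigma> x) = x"
    using inv by (simp_all add: is_involution_iff)
  have p_invol: "\<And>x. p (p x) = x" using p_inv by (simp add: is_involution_iff p_def)
  have \<sigma>_eq: "\<sigma> i = (if v \<le> p i then Suc (p i) else p i)" if "i \<in> {1..n}" for i
    using permutes_apply_init_pattern[OF perm that] by (simp add: p_def v_def)
  have "v \<ge> 1" using permutes_in_image[OF perm, of "Suc n"] by (simp add: v_def)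
  have walk: "\<sigma> (v + j) = Suc n - j" if "v + j \<le> Suc n" for j
    using that
  proof (induction j)
    case 0
    show ?case using invol[of "Suc n"] by (simp add: v_def)
  next
    case (Suc j)
    then have IH: "\<sigma> (v + j) = Suc n - j" by simp
    have "p (v + j) = n - j"
      using \<sigma>_eq[of "v + j"] IH Suc.prems \<open>v \<ge> 1\<close> by (auto split: if_splits)
    then have "p (n - j) = v + j" using p_invol by metis
    then have "\<sigma> (n - j) = v + Suc j"
      using \<sigma>_eq[of "n - j"] Suc.prems \<open>v \<ge> 1\<close> by auto
    then show ?case using invol[of "n - j"] Suc.prems by simp
  qed
  show ?thesis unfolding reverses_tail_def
  proof
    fix i assume "i \<in> {\<sigma> (Suc n)..Suc n}"
    then show "\<sigma> i + i = \<sigma> (Suc n) + Suc n"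
      using walk[of "i - v"] by (simp add: v_def)
  qed
qed

lemma init_pattern_reversed_tail:
  assumes perm: "\<sigma> permutes {1..Suc n}" and rev: "reverses_tail (Suc n) \<sigma>"
    and "\<sigma> (Suc n) \<le> i" and "i \<le> n"
  shows "init_pattern \<sigma> n i = \<sigma> (Suc n) + n - i"
proof -
  have "\<sigma> i + i = \<sigma> (Suc n) + Suc n" using reverses_tailD[OF rev] assms(3,4) by simp
  moreover have "1 \<le> \<sigma> (Suc n)" using permutes_in_image[OF perm, of "Suc n"] by simp
  ultimately show ?thesis using init_pattern_drop_last[OF perm, of i] assms(3,4) by simp
qed

lemma init_pattern_involution_if_reverses_tail:
  assumes inv: "is_involution (Suc n) \<sigma>" and rev: "reverses_tail (Suc n) \<sigma>"
  shows "is_involution n (init_pattern \<sigma> n)"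
proof -
  define v where "v = \<sigma> (Suc n)"
  define p where "p = init_pattern \<sigma> n"
  have perm: "\<sigma> permutes {1..Suc n}" and invol: "\<And>x. \<sigma> (\<sigma> x) = x"
    using inv by (simp_all add: is_involution_iff)
  have p_tail: "p i = v + n - i" if "v \<le> i" "i \<le> n" for i
    using init_pattern_reversed_tail[OF perm rev that[unfolded v_def]] by (simp add: p_def v_def)
  have "p (p i) = i" for i
  proof (cases "i \<in> {1..n}")
    case i: True
    show ?thesis
    proof (cases "i < v")
      case True
      then have "\<sigma> i < v" using reverses_tail_below[OF inv rev] by (simp add: v_def)
      moreover have "\<sigma> i \<in> {1..Suc n}" using permutes_in_image[OF perm] i by simp
      ultimately have "p i = \<sigma> i" and "\<sigma> i \<in> {1..n}"
        using init_pattern_drop_last[OF perm i] permutes_in_image[OF perm, of "Suc n"]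
        by (auto simp: p_def v_def)
      then show ?thesis
        using init_pattern_drop_last[OF perm, of "\<sigma> i"] invol[of i] True by (simp add: p_def v_def)
    next
      case False
      then have "v \<le> v + n - i" and "v + n - i \<le> n" using i by auto
      then show ?thesis using p_tail[of i] p_tail[of "v + n - i"] False i by simp
    qed
  qed (simp add: p_def init_pattern_outside del: atLeastAtMost_iff)
  moreover have "p permutes {1..n}"
    unfolding p_def by (rule init_pattern_permutes[OF permutes_inj_on[OF perm]])
  ultimately show ?thesis by (simp add: is_involution_iff p_def)
qed

lemma involution_fixes_last_if_pattern_gap:
  assumes inv: "is_involution (Suc (Suc n)) \<sigma>"
    and inv1: "is_involution (Suc n) (init_pattern \<sigma> (Suc n))"
    and not_inv: "\<not> is_involution n (init_pattern \<sigma> n)"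
  shows "\<sigma> (Suc (Suc n)) = Suc (Suc n)"
proof (rule ccontr)
  assume moved: "\<sigma> (Suc (Suc n)) \<noteq> Suc (Suc n)"
  have perm: "\<sigma> permutes {1..Suc (Suc n)}" using inv by (simp add: is_involution_def)
  have rev: "reverses_tail (Suc (Suc n)) \<sigma>"
    by (rule reverses_tail_if_init_pattern_involution[OF inv inv1])
  have "\<sigma> (Suc (Suc n)) \<le> Suc n" using permutes_in_image[OF perm, of "Suc (Suc n)"] moved by simp
  then have "reverses_tail (Suc n) (init_pattern \<sigma> (Suc n))"
    using init_pattern_reversed_tail[OF perm rev] by (simp add: reverses_tail_def)
  then have "is_involution n (init_pattern (init_pattern \<sigma> (Suc n)) n)"
    by (rule init_pattern_involution_if_reverses_tail[OF inv1])
  then show False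
    using not_inv init_pattern_init_pattern[OF permutes_inj_on[OF perm]] by simp
qed

lemma is_involution_init_pattern_0: "is_involution 0 (init_pattern \<sigma> 0)"
proof -
  have "init_pattern \<sigma> 0 = id" by (simp add: init_pattern_def fun_eq_iff)
  then show ?thesis by (simp add: is_involution_def permutes_id)
qed

lemma reverses_tail_if_init_patterns_involutions:
  assumes perm: "\<sigma> permutes {1..n}" and "0 < n"
    and patterns: "\<And>j. j \<in> {1..n} \<Longrightarrow> is_involution j (init_pattern \<sigma> j)"
  shows "is_involution n \<sigma>" and "reverses_tail n \<sigma>"
proof -
  show inv: "is_involution n \<sigma>"
    using patterns[of n] \<open>0 < n\<close> by (simp add: init_pattern_self[OF perm])
  have "is_involution (n - 1) (init_pattern \<sigma> (n - 1))"
    using patterns[of "n - 1"] is_involution_init_pattern_0[of \<sigma>] \<open>0 < n\<close>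
    by (cases "n = 1") auto
  then show "reverses_tail n \<sigma>"
    using reverses_tail_if_init_pattern_involution[of "n - 1" \<sigma>] inv \<open>0 < n\<close> by simp
qed

lemma append_value_reverses_tail:
  assumes inv: "is_involution n \<sigma>" and rev: "reverses_tail n \<sigma>" and "0 < n"
  shows "reverses_tail (Suc n) (append_value \<sigma> (\<sigma> n) n)"
proof -
  define e where "e = \<sigma> n"
  have e: "e \<in> {1..n}"
    using inv permutes_in_image[of \<sigma> "{1..n}" n] \<open>0 < n\<close> by (simp add: e_def is_involution_def)
  have "append_value \<sigma> e n i + i = e + Suc n" if "e \<le> i" "i \<le> Suc n" for i
  proof (cases "i = Suc n")
    case False
    then have "i \<in> {1..n}" and "\<sigma> i + i = e + n"
      using that e reverses_tailD[OF rev, of i] by (auto simp: e_def)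
    then show ?thesis by (simp add: append_value_apply)
  qed simp
  then show ?thesis by (simp add: reverses_tail_def e_def)
qed

lemma append_value_is_involution:
  assumes inv: "is_involution n \<sigma>" and rev: "reverses_tail n \<sigma>" and "0 < n"
  shows "is_involution (Suc n) (append_value \<sigma> (\<sigma> n) n)"
proof -
  define e where "e = \<sigma> n"
  define s where "s = append_value \<sigma> e n"
  have perm: "\<sigma> permutes {1..n}" and invol: "\<And>x. \<sigma> (\<sigma> x) = x"
    using inv by (simp_all add: is_involution_iff)
  have e: "e \<in> {1..n}" using permutes_in_image[OF perm, of n] \<open>0 < n\<close> by (simp add: e_def)
  have s_tail: "s i + i = e + Suc n" if "e \<le> i" "i \<le> Suc n" for i
    using reverses_tailD[OF append_value_reverses_tail[OF assms], of i] that by (simp add: s_def e_def)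
  have "s (s i) = i" for i
  proof -
    consider "i \<in> {1..n}" "i < e" | "e \<le> i" "i \<le> Suc n" | "i \<notin> {1..Suc n}"
      using e by fastforce
    then show ?thesis
    proof cases
      case 1
      then have "\<sigma> i < e" "\<sigma> i \<in> {1..n}"
        using reverses_tail_below[OF inv rev, of i] permutes_in_image[OF perm, of i]
        by (simp_all add: e_def)
      moreover have "s i = \<sigma> i" using 1 \<open>\<sigma> i < e\<close> by (simp add: s_def append_value_apply)
      ultimately show ?thesis using 1 invol[of i] by (simp add: s_def append_value_apply)
    next
      case 2
      then have "s i + i = e + Suc n" by (rule s_tail)
      then have "e \<le> s i" "s i \<le> Suc n" using 2 by linarith+
      then have "s (s i) + s i = e + Suc n" by (rule s_tail)
      with \<open>s i + i = e + Suc n\<close> show ?thesis by linarith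
    next
      case 3
      then show ?thesis by (simp add: s_def append_value_outside)
    qed
  qed
  moreover have "s permutes {1..Suc n}"
    unfolding s_def by (rule append_value_permutes[OF perm]) (use e in simp)
  ultimately show ?thesis by (simp add: is_involution_iff s_def e_def)
qed

text \<open>With \<open>c = \<tau> k\<close>: if \<open>c < k\<close> the extension pairs \<open>c\<close> with \<open>k + 2\<close> and fixes \<open>k + 1\<close>;
  if \<open>c = k\<close> it pairs \<open>\<tau> (k - 1)\<close> with \<open>k + 1\<close> and \<open>k\<close> with \<open>k + 2\<close>.\<close>

definition gap_pattern :: "nat \<Rightarrow> (nat \<Rightarrow> nat) \<Rightarrow> nat \<Rightarrow> nat" where
  "gap_pattern k \<tau> = append_value \<tau> (if \<tau> k < k then k else \<tau> (k - 1)) k"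

definition gap_extension :: "nat \<Rightarrow> (nat \<Rightarrow> nat) \<Rightarrow> nat \<Rightarrow> nat" where
  "gap_extension k \<tau> = append_value (gap_pattern k \<tau>) (\<tau> k) (Suc k)"

context
  fixes k :: nat and \<tau> r :: "nat \<Rightarrow> nat"
  assumes r_inv: "is_involution (Suc (Suc k)) r"
    and pattern_not_inv: "\<not> is_involution (Suc k) (init_pattern r (Suc k))"
    and r_pattern: "init_pattern r k = \<tau>"
    and \<tau>_inv: "is_involution k \<tau>" and \<tau>_rev: "reverses_tail k \<tau>" and k_pos: "0 < k"
begin

private lemma r_perm: "r permutes {1..Suc (Suc k)}"
  using r_inv by (simp add: is_involution_def)

private lemma r_invol: "r (r i) = i"
  using r_inv by (simp add: is_involution_iff)

private lemma pattern_Suc_perm: "init_pattern r (Suc k) permutes {1..Suc k}"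
  by (rule init_pattern_permutes[OF permutes_inj_on[OF r_perm]])

private lemma pattern_Suc_pattern: "init_pattern (init_pattern r (Suc k)) k = \<tau>"
  using init_pattern_init_pattern[OF permutes_inj_on[OF r_perm]] r_pattern by simp

private lemma pattern_Suc_apply:
  assumes "i \<in> {1..k}"
  shows "init_pattern r (Suc k) i = (if init_pattern r (Suc k) (Suc k) \<le> \<tau> i
    then Suc (\<tau> i) else \<tau> i)"
  using permutes_apply_init_pattern[OF pattern_Suc_perm assms] pattern_Suc_pattern by simp

private lemma \<tau>_in: "i \<in> {1..k} \<Longrightarrow> \<tau> i \<in> {1..k}"
  using \<tau>_inv permutes_in_image[of \<tau> "{1..k}" i] by (simp add: is_involution_def)

private lemma \<tau>_invol: "\<tau> (\<tau> i) = i"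
  using \<tau>_inv by (simp add: is_involution_iff)

private lemma last_value:
  shows "r (Suc (Suc k)) = \<tau> k" and "init_pattern r (Suc k) (Suc k) \<le> k"
proof -
  define q where "q = init_pattern r (Suc k)"
  define w where "w = r (Suc (Suc k))"
  have w_range: "w \<in> {1..Suc (Suc k)}" using permutes_in_image[OF r_perm] by (simp add: w_def)
  have "w \<le> k"
  proof (rule ccontr)
    assume "\<not> w \<le> k"
    then have "r i + i = w + Suc (Suc k)" if "w \<le> i" "i \<le> Suc (Suc k)" for i
      using that r_invol[of "Suc (Suc k)"] by (auto simp: w_def le_Suc_eq)
    then have "reverses_tail (Suc (Suc k)) r" by (simp add: reverses_tail_def w_def)
    then show False
      using init_pattern_involution_if_reverses_tail[OF r_inv] pattern_not_inv by simp
  qed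
  then have w: "w \<in> {1..k}" using w_range by simp
  have "r w = Suc (Suc k)" using r_invol by (simp add: w_def)
  moreover have "r w = (if w \<le> q w then Suc (q w) else q w)"
    using permutes_apply_init_pattern[OF r_perm, of w, folded q_def w_def] w by simp
  moreover have "q w \<in> {1..Suc k}" using permutes_in_image[OF pattern_Suc_perm, folded q_def] w by simp
  ultimately have "q w = Suc k" by (auto split: if_splits)
  then have "\<tau> w = k" and "q (Suc k) \<le> k"
    using pattern_Suc_apply[OF w] \<tau>_in[OF w] by (auto simp: q_def split: if_splits)
  then show "r (Suc (Suc k)) = \<tau> k" and "init_pattern r (Suc k) (Suc k) \<le> k"
    using \<tau>_invol[of w] by (simp_all add: w_def q_def)
qed

private lemma pattern_last_value_ne: "init_pattern r (Suc k) (Suc k) \<noteq> \<tau> k"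
proof
  assume last: "init_pattern r (Suc k) (Suc k) = \<tau> k"
  have "init_pattern r (Suc k)
      = append_value (init_pattern (init_pattern r (Suc k)) k) (init_pattern r (Suc k) (Suc k)) k"
    by (simp add: append_value_init_pattern[OF pattern_Suc_perm])
  also have "\<dots> = append_value \<tau> (\<tau> k) k"
    using pattern_Suc_pattern last by simp
  finally show False
    using append_value_is_involution[OF \<tau>_inv \<tau>_rev k_pos] pattern_not_inv by simp
qed

private lemma pattern_last_value:
  "init_pattern r (Suc k) (Suc k) = (if \<tau> k < k then k else \<tau> (k - 1))"
proof -
  define q where "q = init_pattern r (Suc k)"
  define u where "u = q (Suc k)"
  define c where "c = \<tau> k"
  have c: "c \<in> {1..k}" using \<tau>_in[of k] k_pos by (simp add: c_def)
  have u: "u \<in> {1..k}"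
    using last_value(2) permutes_in_image[OF pattern_Suc_perm, of "Suc k"]
    by (simp add: u_def q_def)
  have r_apply: "r i = (if c \<le> q i then Suc (q i) else q i)" if "i \<in> {1..Suc k}" for i
    using permutes_apply_init_pattern[OF r_perm that, folded q_def] last_value(1)
    by (simp add: c_def)
  have q_apply: "q i = (if u \<le> \<tau> i then Suc (\<tau> i) else \<tau> i)" if "i \<in> {1..k}" for i
    using pattern_Suc_apply[OF that] by (simp add: u_def q_def)
  have "u \<noteq> c" using pattern_last_value_ne by (simp add: u_def q_def c_def)
  define u' where "u' = r (Suc k)"
  have u'_eq: "u' = (if c \<le> u then Suc u else u)"
    using r_apply[of "Suc k"] by (simp add: u'_def u_def)
  have r_u': "r u' = Suc k" using r_invol by (simp add: u'_def)
  show ?thesis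
  proof (cases "u' = Suc k")
    case True
    then have "u = k" using u'_eq u by (auto split: if_splits)
    then show ?thesis using \<open>u \<noteq> c\<close> c by (simp add: u_def q_def c_def)
  next
    case False
    then have u': "u' \<in> {1..k}" using u'_eq u by (auto split: if_splits)
    moreover have "q u' \<in> {1..Suc k}" using permutes_in_image[OF pattern_Suc_perm[folded q_def]] u' by simp
    ultimately have "q u' = k" using r_apply[of u'] r_u' c by (auto split: if_splits)
    then have "\<tau> u' = k - 1" and "u \<le> k - 1"
      using q_apply[OF u'] \<tau>_in[OF u'] u by (auto split: if_splits)
    then have u'_val: "u' = \<tau> (k - 1)" using \<tau>_invol[of u'] by simp
    show ?thesis
    proof (cases "c < k")
      case True
      then have "\<tau> (k - 1) + (k - 1) = c + k"
        using reverses_tailD[OF \<tau>_rev, of "k - 1"] by (simp add: c_def)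
      then have "u' = Suc c" using u'_val True by simp
      then have "u = c" using u'_eq True by (auto split: if_splits)
      with \<open>u \<noteq> c\<close> show ?thesis by contradiction
    next
      case False
      then have "u' = u" using u'_eq c \<open>u \<le> k - 1\<close> k_pos by auto
      then show ?thesis using u'_val False by (simp add: u_def q_def c_def)
    qed
  qed
qed

lemma gap_extension_unique: "r = gap_extension k \<tau>"
proof -
  have "r = append_value (init_pattern r (Suc k)) (r (Suc (Suc k))) (Suc k)"
    by (simp add: append_value_init_pattern[OF r_perm])
  also have "init_pattern r (Suc k)
      = append_value \<tau> (init_pattern r (Suc k) (Suc k)) k"
    using append_value_init_pattern[OF pattern_Suc_perm] pattern_Suc_pattern by simp
  finally show ?thesis
    by (simp add: gap_extension_def gap_pattern_def last_value pattern_last_value)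
qed

end

lemma gap_pattern_permutes:
  assumes perm: "\<tau> permutes {1..k}" and "2 \<le> k"
  shows "gap_pattern k \<tau> permutes {1..Suc k}" and "init_pattern (gap_pattern k \<tau>) k = \<tau>"
proof -
  have "\<tau> (k - 1) \<in> {1..k}" using permutes_in_image[OF perm] \<open>2 \<le> k\<close> by simp
  then have u: "(if \<tau> k < k then k else \<tau> (k - 1)) \<in> {1..Suc k}" using \<open>2 \<le> k\<close> by auto
  show "gap_pattern k \<tau> permutes {1..Suc k}" and "init_pattern (gap_pattern k \<tau>) k = \<tau>"
    unfolding gap_pattern_def
    by (rule append_value_permutes[OF perm u], rule init_pattern_append_value[OF perm u])
qed

lemma gap_extension_permutes:
  assumes perm: "\<tau> permutes {1..k}" and "2 \<le> k"
  shows "gap_extension k \<tau> permutes {1..Suc (Suc k)}"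
    and "init_pattern (gap_extension k \<tau>) (Suc k) = gap_pattern k \<tau>"
    and "init_pattern (gap_extension k \<tau>) k = \<tau>"
proof -
  have c: "\<tau> k \<in> {1..Suc (Suc k)}" using permutes_in_image[OF perm, of k] \<open>2 \<le> k\<close> by simp
  note q_perm = gap_pattern_permutes(1)[OF assms]
  show g_perm: "gap_extension k \<tau> permutes {1..Suc (Suc k)}"
    and g_pat: "init_pattern (gap_extension k \<tau>) (Suc k) = gap_pattern k \<tau>"
    unfolding gap_extension_def
    by (rule append_value_permutes[OF q_perm c], rule init_pattern_append_value[OF q_perm c])
  have "init_pattern (gap_extension k \<tau>) k = init_pattern (init_pattern (gap_extension k \<tau>) (Suc k)) k"
    using init_pattern_init_pattern[OF permutes_inj_on[OF g_perm]] by simp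
  then show "init_pattern (gap_extension k \<tau>) k = \<tau>"
    using g_pat gap_pattern_permutes(2)[OF assms] by simp
qed

lemma gap_pattern_not_involution:
  assumes inv: "is_involution k \<tau>" and "2 \<le> k"
  shows "\<not> is_involution (Suc k) (gap_pattern k \<tau>)"
proof -
  define q where "q = gap_pattern k \<tau>"
  have perm: "\<tau> permutes {1..k}" and invol: "\<And>x. \<tau> (\<tau> x) = x"
    using inv by (simp_all add: is_involution_iff)
  have "q (q (Suc k)) \<noteq> Suc k"
  proof (cases "\<tau> k < k")
    case True
    then have "q (Suc k) = k" "q k = \<tau> k"
      using \<open>2 \<le> k\<close> by (simp_all add: q_def gap_pattern_def append_value_apply)
    then show ?thesis using True by simp
  next
    case False
    have "\<tau> (k - 1) \<in> {1..k}" using permutes_in_image[OF perm] \<open>2 \<le> k\<close> by simp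
    moreover have "\<tau> k = k" using False permutes_in_image[OF perm, of k] \<open>2 \<le> k\<close> by simp
    then have "\<tau> (k - 1) \<noteq> k" using invol[of "k - 1"] \<open>2 \<le> k\<close> by auto
    ultimately have "q (Suc k) = \<tau> (k - 1)" "q (\<tau> (k - 1)) = k"
      using False invol[of "k - 1"] \<open>2 \<le> k\<close> by (auto simp: q_def gap_pattern_def append_value_apply)
    then show ?thesis by simp
  qed
  then show ?thesis unfolding q_def[symmetric] is_involution_iff by blast
qed

lemma gap_extension_moved_last:
  assumes inv: "is_involution k \<tau>" and "\<tau> k < k"
  shows "gap_extension k \<tau> = transpose (Suc k) (Suc (Suc k)) \<circ> append_value \<tau> (\<tau> k) k
    \<circ> transpose (Suc k) (Suc (Suc k))"
proof
  fix x
  have perm: "\<tau> permutes {1..k}" and invol: "\<And>x. \<tau> (\<tau> x) = x"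
    using inv by (simp_all add: is_involution_iff)
  have \<tau>_in: "\<tau> i \<in> {1..k}" if "i \<in> {1..k}" for i using permutes_in_image[OF perm] that by simp
  have "\<tau> x = k \<longleftrightarrow> x = \<tau> k" using invol by metis
  then show "gap_extension k \<tau> x = (transpose (Suc k) (Suc (Suc k)) \<circ> append_value \<tau> (\<tau> k) k
      \<circ> transpose (Suc k) (Suc (Suc k))) x"
    using \<open>\<tau> k < k\<close> \<tau>_in[of x] \<tau>_in[of k]
    by (auto simp: gap_extension_def gap_pattern_def append_value_def transpose_def)
qed

lemma gap_extension_fixed_last:
  assumes perm: "\<tau> permutes {1..k - 1}" and "2 \<le> k"
  shows "gap_extension k \<tau> = transpose k (Suc k) \<circ> append_value \<tau> (\<tau> (k - 1)) (k - 1)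
    \<circ> transpose (Suc k) (Suc (Suc k)) \<circ> transpose k (Suc k)"
proof
  fix x
  define s where "s = append_value \<tau> (\<tau> (k - 1)) (k - 1)"
  define q where "q = append_value \<tau> (\<tau> (k - 1)) k"
  have "\<tau> k = k" using permutes_not_in[OF perm, of k] \<open>2 \<le> k\<close> by simp
  have d: "\<tau> (k - 1) \<in> {1..k - 1}" using permutes_in_image[OF perm] \<open>2 \<le> k\<close> by simp
  then have d_lt: "\<tau> (k - 1) < k" by auto
  have s_perm: "s permutes {1..k}"
    using append_value_permutes[OF perm, of "\<tau> (k - 1)"] d \<open>2 \<le> k\<close> by (auto simp: s_def)
  have g_q: "gap_extension k \<tau> = append_value q k (Suc k)"
    using \<open>\<tau> k = k\<close> by (simp add: gap_extension_def gap_pattern_def q_def)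
  consider "x \<in> {1..k - 1}" | "x = k" | "x = Suc k" | "x = Suc (Suc k)" | "x \<notin> {1..Suc (Suc k)}"
    by fastforce
  then show "gap_extension k \<tau> x = (transpose k (Suc k) \<circ> s \<circ> transpose (Suc k) (Suc (Suc k))
      \<circ> transpose k (Suc k)) x"
  proof cases
    case 1
    moreover have "x \<in> {1..k}" using 1 by auto
    ultimately have "q x = s x" by (simp add: q_def s_def append_value_apply)
    moreover have "s x \<in> {1..k}" using permutes_in_image[OF s_perm, of x] \<open>x \<in> {1..k}\<close> by simp
    ultimately show ?thesis
      using 1 by (auto simp: g_q append_value_apply transpose_def)
  next
    case 2
    then show ?thesis using \<open>\<tau> k = k\<close> d_lt \<open>2 \<le> k\<close>
      by (simp add: g_q q_def append_value_apply permutes_not_in[OF s_perm])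
  next
    case 3
    have "s k = \<tau> (k - 1)" using append_value_last[of \<tau> "\<tau> (k - 1)" "k - 1"] \<open>2 \<le> k\<close>
      by (simp add: s_def)
    then show ?thesis using 3 d_lt \<open>2 \<le> k\<close> by (simp add: g_q q_def append_value_apply)
  next
    case 4
    then show ?thesis by (simp add: g_q permutes_not_in[OF s_perm])
  next
    case 5
    then have "x \<noteq> k" "x \<noteq> Suc k" "x \<noteq> Suc (Suc k)" "x \<notin> {1..k}"
      using \<open>2 \<le> k\<close> by auto
    then show ?thesis using 5 by (simp add: g_q append_value_outside permutes_not_in[OF s_perm])
  qed
qed

lemma gap_extension_is_involution:
  assumes inv: "is_involution k \<tau>" and rev: "reverses_tail k \<tau>"
    and rev': "\<tau> k = k \<Longrightarrow> reverses_tail (k - 1) \<tau>" and "2 \<le> k"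
  shows "is_involution (Suc (Suc k)) (gap_extension k \<tau>)"
proof -
  have perm: "\<tau> permutes {1..k}" and invol: "\<And>x. \<tau> (\<tau> x) = x"
    using inv by (simp_all add: is_involution_iff)
  have "gap_extension k \<tau> (gap_extension k \<tau> x) = x" for x
  proof (cases "\<tau> k < k")
    case True
    have "is_involution (Suc k) (append_value \<tau> (\<tau> k) k)"
      using append_value_is_involution[OF inv rev] \<open>2 \<le> k\<close> by simp
    then show ?thesis by (simp add: gap_extension_moved_last[OF inv True] is_involution_iff)
  next
    case False
    then have "\<tau> k = k" using permutes_in_image[OF perm, of k] \<open>2 \<le> k\<close> by simp
    then have perm': "\<tau> permutes {1..k - 1}"
      using permutes_drop_fixed_last[of \<tau> "k - 1"] perm \<open>2 \<le> k\<close> by simp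
    define s where "s = append_value \<tau> (\<tau> (k - 1)) (k - 1)"
    have "is_involution k s"
      using append_value_is_involution[of "k - 1" \<tau>] perm' invol rev'[OF \<open>\<tau> k = k\<close>] \<open>2 \<le> k\<close>
      by (simp add: s_def is_involution_iff)
    then have s_perm: "s permutes {1..k}" and s_invol: "s (s y) = y" for y
      by (simp_all add: is_involution_iff)
    have s_commute: "s (transpose (Suc k) (Suc (Suc k)) y) = transpose (Suc k) (Suc (Suc k)) (s y)" for y
      by (rule permutes_transpose_commute[OF s_perm]) auto
    have "gap_extension k \<tau>
        = transpose k (Suc k) \<circ> s \<circ> transpose (Suc k) (Suc (Suc k)) \<circ> transpose k (Suc k)"
      unfolding s_def by (rule gap_extension_fixed_last[OF perm' \<open>2 \<le> k\<close>])
    then show ?thesis using s_invol s_commute by simp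
  qed
  moreover have "gap_extension k \<tau> permutes {1..Suc (Suc k)}"
    by (rule gap_extension_permutes(1)[OF perm \<open>2 \<le> k\<close>])
  ultimately show ?thesis by (simp add: is_involution_iff)
qed

lemma jset_Suc:
  "jset (Suc m) \<sigma> = (if is_involution (Suc m) (init_pattern \<sigma> (Suc m))
     then insert (Suc m) (jset m \<sigma>) else jset m \<sigma>)"
  by (auto simp: jset_def le_Suc_eq)

lemma jset_init_pattern:
  assumes "inj_on \<sigma> {1..m}"
  shows "jset m (init_pattern \<sigma> m) = jset m \<sigma>"
  using init_pattern_init_pattern[OF assms] by (auto simp: jset_def)

lemma jset_eq_gap_iff:
  assumes "jset k \<sigma> = {0..k}"
  shows "jset (k + 3) \<sigma> = {0..k} \<union> {k + 2, k + 3} \<longleftrightarrow>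
    \<not> is_involution (Suc k) (init_pattern \<sigma> (Suc k)) \<and>
    is_involution (Suc (Suc k)) (init_pattern \<sigma> (Suc (Suc k))) \<and>
    is_involution (Suc (Suc (Suc k))) (init_pattern \<sigma> (Suc (Suc (Suc k))))"
    (is "_ \<longleftrightarrow> \<not> ?A1 \<and> ?A2 \<and> ?A3")
proof -
  have J: "jset (k + 3) \<sigma> = {0..k} \<union> {i. i = Suc k \<and> ?A1 \<or> i = Suc (Suc k) \<and> ?A2 \<or> i = k + 3 \<and> ?A3}"
    using assms by (auto simp: jset_Suc numeral_3_eq_3)
  show ?thesis unfolding J
  proof
    assume eq: "{0..k} \<union> {i. i = Suc k \<and> ?A1 \<or> i = Suc (Suc k) \<and> ?A2 \<or> i = k + 3 \<and> ?A3}
      = {0..k} \<union> {k + 2, k + 3}"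
    have "Suc k \<notin> {0..k} \<union> {k + 2, k + 3}" "Suc (Suc k) \<in> {0..k} \<union> {k + 2, k + 3}"
      "k + 3 \<in> {0..k} \<union> {k + 2, k + 3}" by auto
    then show "\<not> ?A1 \<and> ?A2 \<and> ?A3" unfolding eq[symmetric] by auto
  qed auto
qed

lemma involution_pattern_gap_iff_gap_extension:
  assumes "is_involution k \<tau>" and "reverses_tail k \<tau>"
    and "\<tau> k = k \<Longrightarrow> reverses_tail (k - 1) \<tau>" and "2 \<le> k"
  shows "\<rho> permutes {1..Suc (Suc (Suc k))} \<and> init_pattern \<rho> k = \<tau> \<and>
      \<not> is_involution (Suc k) (init_pattern \<rho> (Suc k)) \<and>
      is_involution (Suc (Suc k)) (init_pattern \<rho> (Suc (Suc k))) \<and>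
      is_involution (Suc (Suc (Suc k))) \<rho>
    \<longleftrightarrow> \<rho> = gap_extension k \<tau>"
    (is "?P \<longleftrightarrow> _")
proof
  assume ?P
  then have "\<rho> (Suc (Suc (Suc k))) = Suc (Suc (Suc k))"
    by (intro involution_fixes_last_if_pattern_gap) auto
  then have "\<rho> permutes {1..Suc (Suc k)}" using \<open>?P\<close> permutes_drop_fixed_last by blast
  then have "is_involution (Suc (Suc k)) \<rho>" using \<open>?P\<close> by (simp add: init_pattern_self)
  then show "\<rho> = gap_extension k \<tau>"
    using gap_extension_unique[of k \<rho> \<tau>] \<open>?P\<close> assms by simp
next
  assume \<rho>: "\<rho> = gap_extension k \<tau>"
  have perm: "\<tau> permutes {1..k}" using assms(1) by (simp add: is_involution_def)
  have inv: "is_involution (Suc (Suc k)) \<rho>"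
    using gap_extension_is_involution[OF assms] \<rho> by simp
  then have "\<rho> permutes {1..Suc (Suc (Suc k))}"
    by (auto simp: is_involution_def intro: permutes_subset)
  moreover have "init_pattern \<rho> (Suc (Suc k)) = \<rho>"
    using inv by (simp add: init_pattern_self is_involution_def)
  ultimately show ?P
    using inv gap_extension_permutes(2,3)[OF perm \<open>2 \<le> k\<close>]
      gap_pattern_not_involution[OF assms(1,4)] \<rho> by (simp add: is_involution_iff)
qed

lemma jset_gap_iff_gap_extension:
  assumes "jset k \<tau> = {0..k}" and "is_involution k \<tau>" and "reverses_tail k \<tau>"
    and "\<tau> k = k \<Longrightarrow> reverses_tail (k - 1) \<tau>" and "2 \<le> k"
  shows "\<rho> permutes {1..k + 3} \<and> jset (k + 3) \<rho> = {0..k} \<union> {k + 2, k + 3}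
      \<and> init_pattern \<rho> k = \<tau> \<longleftrightarrow> \<rho> = gap_extension k \<tau>"
proof -
  have k3: "k + 3 = Suc (Suc (Suc k))" by simp
  have "jset (k + 3) \<rho> = {0..k} \<union> {k + 2, k + 3} \<longleftrightarrow>
      \<not> is_involution (Suc k) (init_pattern \<rho> (Suc k)) \<and>
      is_involution (Suc (Suc k)) (init_pattern \<rho> (Suc (Suc k))) \<and>
      is_involution (Suc (Suc (Suc k))) \<rho>"
    if perm: "\<rho> permutes {1..k + 3}" and pat: "init_pattern \<rho> k = \<tau>"
  proof -
    have "jset k \<rho> = {0..k}"
      using jset_init_pattern[OF permutes_inj_on[OF perm], of k] pat assms(1) by simp
    moreover have "init_pattern \<rho> (Suc (Suc (Suc k))) = \<rho>"
      using init_pattern_self[OF perm[unfolded k3]] .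
    ultimately show ?thesis using jset_eq_gap_iff by simp
  qed
  then show ?thesis
    using involution_pattern_gap_iff_gap_extension[OF assms(2-5), of \<rho>] unfolding k3 by blast
qed

theorem mainTheorem12:
  fixes k :: nat and \<tau> :: "nat \<Rightarrow> nat"
  assumes "k \<ge> 2" and "\<tau> permutes {1..k}" and "jset k \<tau> = {0..k}"
  shows "\<exists>!\<tau>b. \<tau>b permutes {1..k+3} \<and> jset (k+3) \<tau>b = {0..k} \<union> {k+2, k+3}
              \<and> init_pattern \<tau>b k = \<tau>"
proof -
  have patterns: "is_involution j (init_pattern \<tau> j)" if "j \<in> {1..k}" for j
  proof -
    have "j \<in> jset k \<tau>" using assms(3) that by simp
    then show ?thesis using that by (simp add: jset_def)
  qed
  have \<tau>: "is_involution k \<tau>" "reverses_tail k \<tau>"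
    using reverses_tail_if_init_patterns_involutions[OF assms(2) _ patterns] assms(1) by auto
  have \<tau>_rev': "reverses_tail (k - 1) \<tau>" if "\<tau> k = k"
  proof (rule reverses_tail_if_init_patterns_involutions(2))
    show "\<tau> permutes {1..k - 1}"
      using permutes_drop_fixed_last[of \<tau> "k - 1"] assms(1,2) that by simp
  qed (use patterns assms(1) in auto)
  show ?thesis using jset_gap_iff_gap_extension[OF assms(3) \<tau> \<tau>_rev' assms(1)] by auto
qed

end
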